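(* Under the AOA-gs sampling rule, the best alternative eventually always belongs to the estimated good enough subset: almost surely there exists $t_0$ such that $\langle 1\rangle\in\widehat{\mathcal F}_t^m$ for all $t\ge t_0$.
   Context: There are $k\ge2$ alternatives and an integer $1\le m<k$. Alternative $h$ produces i.i.d. samples $X_{h,1},X_{h,2},\dots\sim N(\mu_h,\sigma_h^2)$, independent across alternatives, with $\sigma_h>0$ known and the true means $\mu_1,\dots,\mu_k$ pairwise distinct; $\langle 1\rangle$ is the index of the largest true mean. Independent conjugate priors $\mu_h\sim N(\mu_h^{(0)},(\sigma_h^{(0)})^2)$ are used. If after $t$ total samples alternative $h$ has received $t_h$ samples with sample mean $m_h^{(t)}$, its posterior is $N(\mu_h^{(t)},(\sigma_h^{(t)})^2)$ with $(\sigma_h^{(t)})^2=\big(1/(\sigma_h^{(0)})^2+t_h/\sigma_h^2\big)^{-1}$ and $\mu_h^{(t)}=(\sigma_h^{(t)})^2\big(\mu_h^{(0)}/(\sigma_h^{(0)})^2+t_h m_h^{(t)}/\sigma_h^2\big)$. Let $\langle 1\rangle_t,\dots,\langle k\rangle_t$ order the alternatives by decreasing posterior mean, $\widehat{\mathcal F}_t^m=\{\langle1\rangle_t,\dots,\langle m\rangle_t\}$ and $\widehat{\mathcal F}_t^{k-m}=\{\langle m+1\rangle_t,\dots,\langle k\rangle_t\}$. AOA-gs rule: after an initial stage giving each alternative $n_0\ge1$ samples, at each step $t$ and for each candidate $a\in\{1,\dots,k\}$ set $s_h^2(a)=(\sigma_h^{(t)})^2$ for $h\ne a$ and $s_a^2(a)=\big(1/(\sigma_a^{(0)})^2+(t_a+1)/\sigma_a^2\big)^{-1}$,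 and compute $$\widehat V_t(a)=\max_{i\in\widehat{\mathcal F}_t^m}\ \min_{j\in\widehat{\mathcal F}_t^{k-m}}\frac{(\mu_i^{(t)}-\mu_j^{(t)})^2}{s_i^2(a)+s_j^2(a)};$$ the next sample is drawn (from the true distribution) for an alternative $a$ maximizing $\widehat V_t(a)$. *)

theory Defs
  imports "HOL-Probability.Probability"
begin

text \<open>Alternatives are indexed 0..<k. X h i w is the i-th sample (i = 0,1,...) of alternative h.\<close>

text \<open>Posterior variance after n samples, prior sd s0, sampling sd s.\<close>
definition post_var :: "real \<Rightarrow> real \<Rightarrow> nat \<Rightarrow> real" where
  "post_var s0 s n = inverse (1 / s0\<^sup>2 + real n / s\<^sup>2)"

text \<open>Posterior mean after n samples with sample sum S (so S = n * sample mean).\<close>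
definition post_mean :: "real \<Rightarrow> real \<Rightarrow> real \<Rightarrow> nat \<Rightarrow> real \<Rightarrow> real" where
  "post_mean mu0 s0 s n S = post_var s0 s n * (mu0 / s0\<^sup>2 + S / s\<^sup>2)"

text \<open>Estimated top-m set: alternatives ordered by decreasing posterior mean pm,
  ties broken by smaller index first; the first m of them.\<close>
definition top_set :: "nat \<Rightarrow> nat \<Rightarrow> (nat \<Rightarrow> real) \<Rightarrow> nat set" where
  "top_set k m pm = {i. i < k \<and>
     card {j. j < k \<and> (pm i < pm j \<or> (pm j = pm i \<and> j < i))} < m}"

definition bot_set :: "nat \<Rightarrow> nat \<Rightarrow> (nat \<Rightarrow> real) \<Rightarrow> nat set" where
  "bot_set k m pm = {..<k} - top_set k m pm"

definition V_val :: "nat \<Rightarrow> nat \<Rightarrow> (nat \<Rightarrow> real) \<Rightarrow> (nat \<Rightarrow> real) \<Rightarrow> real" where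
  "V_val k m pm sv = Max ((\<lambda>i. Min ((\<lambda>j. (pm i - pm j)\<^sup>2 / (sv i + sv j)) ` bot_set k m pm))
                          ` top_set k m pm)"

definition pmeans :: "(nat \<Rightarrow> real) \<Rightarrow> (nat \<Rightarrow> real) \<Rightarrow> (nat \<Rightarrow> real) \<Rightarrow>
    (nat \<Rightarrow> nat \<Rightarrow> 'w \<Rightarrow> real) \<Rightarrow> 'w \<Rightarrow> (nat \<Rightarrow> nat) \<Rightarrow> nat \<Rightarrow> real" where
  "pmeans mu0 s0 s X w c h = post_mean (mu0 h) (s0 h) (s h) (c h) (\<Sum>i<c h. X h i w)"

definition Vhat :: "nat \<Rightarrow> nat \<Rightarrow> (nat \<Rightarrow> real) \<Rightarrow> (nat \<Rightarrow> real) \<Rightarrow> (nat \<Rightarrow> real) \<Rightarrow>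
    (nat \<Rightarrow> nat \<Rightarrow> 'w \<Rightarrow> real) \<Rightarrow> 'w \<Rightarrow> (nat \<Rightarrow> nat) \<Rightarrow> nat \<Rightarrow> real" where
  "Vhat k m mu0 s0 s X w c a = V_val k m (pmeans mu0 s0 s X w c)
      (\<lambda>h. if h = a then post_var (s0 h) (s h) (c h + 1) else post_var (s0 h) (s h) (c h))"

text \<open>Sample counts after the initial stage (n0 each) and r further AOA-gs steps.
  pick r V is the (arbitrary) tie-breaking selection of a maximiser of V at step r.\<close>
primrec aoa_counts :: "nat \<Rightarrow> nat \<Rightarrow> nat \<Rightarrow> (nat \<Rightarrow> real) \<Rightarrow> (nat \<Rightarrow> real) \<Rightarrow> (nat \<Rightarrow> real) \<Rightarrow>
    (nat \<Rightarrow> nat \<Rightarrow> 'w \<Rightarrow> real) \<Rightarrow> (nat \<Rightarrow> (nat \<Rightarrow> real) \<Rightarrow> nat) \<Rightarrow> 'w \<Rightarrow> nat \<Rightarrow> (nat \<Rightarrow> nat)" where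
  "aoa_counts k m n0 mu0 s0 s X pick w 0 = (\<lambda>h. n0)"
| "aoa_counts k m n0 mu0 s0 s X pick w (Suc r) =
    (let c = aoa_counts k m n0 mu0 s0 s X pick w r;
         a = pick r (Vhat k m mu0 s0 s X w c)
     in c(a := c a + 1))"

end

theory Submission
  imports Defs "HOL-Real_Asymp.Real_Asymp"
begin

text \<open>Almost surely the sample means of every alternative converge to the true means, and none of
  countably many coincidences between posterior quantities occurs (each is a null event, because
  the Gaussian partial sums have densities and are independent across alternatives). Fix such an
  outcome. Alternatives sampled infinitely often have posterior means converging to their true
  means; the others are eventually frozen. The limiting means are therefore pairwise distinct, and
  the estimated top-\<open>m\<close> set eventually equals the top-\<open>m\<close> set of the limits. If the best alternative
  were outside it, some pair between the two limiting sets would involve a finitely sampled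
  alternative, and the AOA-gs values would eventually separate: every infinitely sampled candidate
  has value below some threshold, while some finitely sampled candidate has value above it. Since
  eventually only infinitely sampled candidates are chosen, this contradicts the maximisation.\<close>

lemma top_set_subset: "top_set k m L \<subseteq> {..<k}"
  unfolding top_set_def by auto

lemma top_set_less:
  assumes inj: "inj_on L {..<k}" and i: "i \<in> top_set k m L" and j: "j < k" "j \<notin> top_set k m L"
  shows "L j < L i"
proof (rule ccontr)
  assume "\<not> L j < L i"
  have ik: "i < k" using i by (simp add: top_set_def)
  have "i \<noteq> j" using i j by auto
  hence lt: "L i < L j" using \<open>\<not> L j < L i\<close> inj ik j
    by (metis inj_on_def lessThan_iff linorder_neqE_linordered_idom)
  let ?A = "{h. h < k \<and> (L j < L h \<or> (L h = L j \<and> h < j))}"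
  let ?B = "{h. h < k \<and> (L i < L h \<or> (L h = L i \<and> h < i))}"
  have "?A \<subset> ?B"
  proof
    show "?A \<subseteq> ?B"
    proof
      fix h assume "h \<in> ?A"
      hence hk: "h < k" and "L j < L h \<or> (L h = L j \<and> h < j)" by auto
      hence "L j < L h \<or> h = j" using inj j by (metis inj_on_def lessThan_iff less_irrefl)
      thus "h \<in> ?B" using lt hk by auto
    qed
    show "?A \<noteq> ?B" using lt j by auto
  qed
  hence "card ?A < card ?B" by (intro psubset_card_mono) auto
  also have "card ?B < m" using i by (simp add: top_set_def)
  finally have "j \<in> top_set k m L" using j by (simp add: top_set_def)
  thus False using j by simp
qed

lemma top_set_nonempty:
  assumes "inj_on L {..<k}" "1 \<le> m" "0 < k"
  shows "top_set k m L \<noteq> {}"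
proof -
  have "Max (L ` {..<k}) \<in> L ` {..<k}" using assms by (intro Max_in) auto
  then obtain i where i: "i < k" "L i = Max (L ` {..<k})" by auto
  have "{h. h < k \<and> (L i < L h \<or> (L h = L i \<and> h < i))} = {}"
  proof -
    have "L h \<le> L i" if "h < k" for h using i that by simp
    moreover have "L h = L i \<Longrightarrow> h < k \<Longrightarrow> h = i" for h
      using assms(1) i(1) by (auto simp: inj_on_def)
    ultimately show ?thesis by force
  qed
  hence "i \<in> top_set k m L" using i(1) assms(2) unfolding top_set_def by (simp del: Collect_empty_eq)
  thus ?thesis by blast
qed

lemma bot_set_nonempty:
  assumes "inj_on L {..<k}" "m < k"
  shows "bot_set k m L \<noteq> {}"
proof -
  have "Min (L ` {..<k}) \<in> L ` {..<k}" using assms by (intro Min_in) auto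
  then obtain j where j: "j < k" "L j = Min (L ` {..<k})" by auto
  let ?above = "{h. h < k \<and> (L j < L h \<or> (L h = L j \<and> h < j))}"
  have "{..<k} - {j} \<subseteq> ?above"
  proof
    fix h assume h: "h \<in> {..<k} - {j}"
    hence "L h \<noteq> L j" using assms(1) j(1) unfolding inj_on_def by auto
    moreover have "L j \<le> L h" using h j by simp
    ultimately show "h \<in> ?above" using h by auto
  qed
  hence "k - 1 \<le> card ?above" using card_mono[of ?above "{..<k} - {j}"] j(1) by simp
  hence "j \<notin> top_set k m L" using assms(2) j(1) by (auto simp: top_set_def)
  thus ?thesis using j(1) by (auto simp: bot_set_def)
qed

lemma top_set_cong:
  assumes "\<And>i j. i < k \<Longrightarrow> j < k \<Longrightarrow> (p i < p j \<longleftrightarrow> q i < q j) \<and> (p i = p j \<longleftrightarrow> q i = q j)"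
  shows "top_set k m p = top_set k m q"
proof -
  have "\<And>i. i < k \<Longrightarrow> {j. j < k \<and> (p i < p j \<or> (p j = p i \<and> j < i))}
                     = {j. j < k \<and> (q i < q j \<or> (q j = q i \<and> j < i))}"
    using assms by blast
  thus ?thesis unfolding top_set_def by (auto intro!: Collect_cong)
qed

definition max_min :: "'a set \<Rightarrow> 'b set \<Rightarrow> ('a \<Rightarrow> 'b \<Rightarrow> 'c::linorder) \<Rightarrow> 'c"
  where "max_min T B f = Max ((\<lambda>i. Min (f i ` B)) ` T)"

lemma V_val_eq_max_min:
  "V_val k m pm sv = max_min (top_set k m pm) (bot_set k m pm) (\<lambda>i j. (pm i - pm j)\<^sup>2 / (sv i + sv j))"
  unfolding V_val_def max_min_def ..

lemma max_min_less:
  assumes "finite T" "finite B" "T \<noteq> {}" "\<And>i. i \<in> T \<Longrightarrow> \<exists>j\<in>B. f i j < \<theta>"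
  shows "max_min T B f < \<theta>"
proof -
  have "Min (f i ` B) < \<theta>" if i: "i \<in> T" for i
  proof -
    obtain j where "j \<in> B" "f i j < \<theta>" using assms(4)[OF i] by blast
    moreover have "Min (f i ` B) \<le> f i j" using \<open>j \<in> B\<close> assms(2) by (intro Min_le) auto
    ultimately show ?thesis by order
  qed
  thus ?thesis unfolding max_min_def using assms(1,3) by (subst Max_less_iff) auto
qed

lemma max_min_greater:
  assumes "finite T" "finite B" "B \<noteq> {}" "i \<in> T" "\<And>j. j \<in> B \<Longrightarrow> \<theta> < f i j"
  shows "\<theta> < max_min T B f"
proof -
  have "\<theta> < Min (f i ` B)" using assms(2,3,5) by (subst Min_gr_iff) auto
  also have "\<dots> \<le> max_min T B f" unfolding max_min_def using assms(1,4) by (intro Max_ge) auto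
  finally show ?thesis .
qed

lemma post_var_pos: "s0 > 0 \<Longrightarrow> s > 0 \<Longrightarrow> post_var s0 s n > 0"
  unfolding post_var_def by (simp add: add_pos_nonneg)

lemma post_var_Suc_less: "s0 > 0 \<Longrightarrow> s > 0 \<Longrightarrow> post_var s0 s (Suc n) < post_var s0 s n"
  unfolding post_var_def
  by (rule less_imp_inverse_less) (auto simp: add_pos_nonneg divide_strict_right_mono)

lemma post_var_tendsto_0: "s0 > 0 \<Longrightarrow> s > 0 \<Longrightarrow> (\<lambda>n. post_var s0 s n) \<longlonglongrightarrow> 0"
  unfolding post_var_def by real_asymp

lemma post_mean_affine:
  "post_mean m0 s0 s n y = post_var s0 s n * (m0 / s0\<^sup>2) + (post_var s0 s n / s\<^sup>2) * y"
  unfolding post_mean_def by (simp add: algebra_simps)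

lemma post_mean_eq_iff:
  assumes "s0 > 0" "s > 0"
  shows "post_mean m0 s0 s n y = t \<longleftrightarrow>
           y = (t - post_var s0 s n * (m0 / s0\<^sup>2)) / (post_var s0 s n / s\<^sup>2)"
  using post_var_pos[OF assms, of n] assms(2) unfolding post_mean_affine by (auto simp: field_simps)

lemma borel_measurable_post_mean[measurable]: "post_mean m0 s0 s n \<in> borel_measurable borel"
  unfolding post_mean_affine[abs_def] by measurable

lemma post_mean_tendsto:
  assumes "s0 > 0" "s > 0" "(\<lambda>n. S n / real n) \<longlonglongrightarrow> \<mu>"
  shows "(\<lambda>n. post_mean m0 s0 s n (S n)) \<longlonglongrightarrow> \<mu>"
proof -
  let ?f = "\<lambda>n. (m0 / s0\<^sup>2 * inverse (real n) + (S n / real n) / s\<^sup>2) / (1 / s0\<^sup>2 * inverse (real n) + 1 / s\<^sup>2)"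
  have "eventually (\<lambda>n. ?f n = post_mean m0 s0 s n (S n)) sequentially"
    using eventually_gt_at_top[of 0]
  proof eventually_elim
    case (elim n)
    hence "?f n = (m0 / s0\<^sup>2 + S n / s\<^sup>2) / (1 / s0\<^sup>2 + real n / s\<^sup>2)"
      by (subst mult_divide_mult_cancel_left[symmetric, of "real n"]) (simp_all add: field_simps)
    thus ?case unfolding post_mean_def post_var_def by (simp add: divide_inverse mult.commute)
  qed
  moreover have "?f \<longlonglongrightarrow> (m0 / s0\<^sup>2 * 0 + \<mu> / s\<^sup>2) / (1 / s0\<^sup>2 * 0 + 1 / s\<^sup>2)"
    using assms by (intro tendsto_intros lim_inverse_n) auto
  ultimately show ?thesis using assms(2) by (simp add: tendsto_cong)
qed

lemma eventually_gt_divide_tendsto_0: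
  fixes f g :: "nat \<Rightarrow> real"
  assumes "f \<longlonglongrightarrow> a" "a > 0" "g \<longlonglongrightarrow> 0" "eventually (\<lambda>r. g r > 0) sequentially"
  shows "eventually (\<lambda>r. \<theta> < f r / g r) sequentially"
proof -
  define t where "t = \<bar>\<theta>\<bar> + 1"
  have t: "t > 0" "\<theta> < t" unfolding t_def by auto
  have "eventually (\<lambda>r. a / 2 < f r) sequentially" using assms(1,2) by (intro order_tendstoD(1)) auto
  moreover have "eventually (\<lambda>r. g r < a / (2 * t)) sequentially"
    using assms(2,3) t by (intro order_tendstoD(2)) auto
  ultimately show ?thesis using assms(4)
  proof eventually_elim
    case (elim r)
    have "t * g r < f r" using elim(1,2) t by (simp add: field_simps)
    hence "t < f r / g r" using elim(3) by (simp add: field_simps)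
    thus ?case using t by linarith
  qed
qed

definition post_mean_after ::
    "(nat \<Rightarrow> real) \<Rightarrow> (nat \<Rightarrow> real) \<Rightarrow> (nat \<Rightarrow> real) \<Rightarrow> (nat \<Rightarrow> nat \<Rightarrow> 'w \<Rightarrow> real) \<Rightarrow> 'w \<Rightarrow> nat \<Rightarrow> nat \<Rightarrow> real"
  where "post_mean_after mu0 s0 s X w h n = post_mean (mu0 h) (s0 h) (s h) n (\<Sum>i<n. X h i w)"

text \<open>The genericity assumptions \<open>post_means_distinct\<close>, \<open>post_mean_ne_mean\<close> and
  \<open>weighted_gaps_distinct\<close> exclude ties in the limiting ranking and between limiting AOA-gs values.\<close>

locale aoa_path =
  fixes k m n0 :: nat and mu sigma mu0 sigma0 :: "nat \<Rightarrow> real" and X :: "nat \<Rightarrow> nat \<Rightarrow> 'w \<Rightarrow> real"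
    and pick :: "nat \<Rightarrow> (nat \<Rightarrow> real) \<Rightarrow> nat" and best :: nat and w :: 'w
  assumes m_pos: "1 \<le> m" and m_less: "m < k" and n0_pos: "1 \<le> n0"
    and sigma_pos: "\<And>h. h < k \<Longrightarrow> sigma h > 0" and sigma0_pos: "\<And>h. h < k \<Longrightarrow> sigma0 h > 0"
    and mu_inj: "\<And>h h'. h < k \<Longrightarrow> h' < k \<Longrightarrow> h \<noteq> h' \<Longrightarrow> mu h \<noteq> mu h'"
    and best_less: "best < k" and best_max: "\<And>h. h < k \<Longrightarrow> mu h \<le> mu best"
    and pick: "\<And>r V. pick r V < k \<and> (\<forall>a<k. V a \<le> V (pick r V))"
    and sample_mean_lim: "\<And>h. h < k \<Longrightarrow> (\<lambda>n. (\<Sum>i<n. X h i w) / real n) \<longlonglongrightarrow> mu h"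
    and post_means_distinct: "\<And>h h' n n'. h < k \<Longrightarrow> h' < k \<Longrightarrow> h \<noteq> h' \<Longrightarrow> 1 \<le> n \<Longrightarrow> 1 \<le> n' \<Longrightarrow>
           post_mean_after mu0 sigma0 sigma X w h n \<noteq> post_mean_after mu0 sigma0 sigma X w h' n'"
    and post_mean_ne_mean: "\<And>h h' n. h < k \<Longrightarrow> h' < k \<Longrightarrow> 1 \<le> n \<Longrightarrow>
           post_mean_after mu0 sigma0 sigma X w h n \<noteq> mu h'"
    and weighted_gaps_distinct: "\<And>i j j' n n'. i < k \<Longrightarrow> j < k \<Longrightarrow> j' < k \<Longrightarrow> j \<noteq> j' \<Longrightarrow>
           1 \<le> n \<Longrightarrow> 1 \<le> n' \<Longrightarrow>
           (mu i - post_mean_after mu0 sigma0 sigma X w j n)\<^sup>2 * post_var (sigma0 j') (sigma j') n' \<noteq>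
           (mu i - post_mean_after mu0 sigma0 sigma X w j' n')\<^sup>2 * post_var (sigma0 j) (sigma j) n"
begin

abbreviation "c r \<equiv> aoa_counts k m n0 mu0 sigma0 sigma X pick w r"
abbreviation "PM \<equiv> post_mean_after mu0 sigma0 sigma X w"
abbreviation "PV h n \<equiv> post_var (sigma0 h) (sigma h) n"
abbreviation "Vh r \<equiv> Vhat k m mu0 sigma0 sigma X w (c r)"
abbreviation "a r \<equiv> pick r (Vh r)"

definition "cand_var r b h = (if h = b then PV h (c r h + 1) else PV h (c r h))"
definition "gap_ratio r b i j = (PM i (c r i) - PM j (c r j))\<^sup>2 / (cand_var r b i + cand_var r b j)"

lemma c_Suc: "c (Suc r) = (c r)(a r := c r (a r) + 1)"
  by (simp add: Let_def)

lemma a_less: "a r < k"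
  using pick by blast

lemma a_max: "b < k \<Longrightarrow> Vh r b \<le> Vh r (a r)"
  using pick by blast

lemma incseq_c: "incseq (\<lambda>r. c r h)"
  by (intro incseq_SucI) (simp add: c_Suc del: aoa_counts.simps)

lemma c_ge_n0: "n0 \<le> c r h"
  by (induction r) (auto simp: c_Suc simp del: aoa_counts.simps(2))

lemma PV_pos: "h < k \<Longrightarrow> PV h n > 0"
  using sigma_pos sigma0_pos by (intro post_var_pos) auto

lemma PV_Suc_less: "h < k \<Longrightarrow> PV h (Suc n) < PV h n"
  using sigma_pos sigma0_pos by (intro post_var_Suc_less) auto

lemma PV_tendsto_0: "h < k \<Longrightarrow> (\<lambda>n. PV h n) \<longlonglongrightarrow> 0"
  using sigma_pos sigma0_pos by (intro post_var_tendsto_0) auto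

lemma PM_tendsto: "h < k \<Longrightarrow> (\<lambda>n. PM h n) \<longlonglongrightarrow> mu h"
  unfolding post_mean_after_def using sigma_pos sigma0_pos sample_mean_lim by (intro post_mean_tendsto) auto

lemma cand_var_pos: "h < k \<Longrightarrow> 0 < cand_var r b h"
  unfolding cand_var_def using PV_pos by auto

subsection \<open>Finitely and infinitely sampled alternatives\<close>

definition "sampled_finitely h \<longleftrightarrow> (\<exists>N. \<forall>r. c r h \<le> N)"
definition "S_inf = {h. h < k \<and> \<not> sampled_finitely h}"
definition "S_fin = {h. h < k \<and> sampled_finitely h}"
definition "final_count h = (SOME C. eventually (\<lambda>r. c r h = C) sequentially)"

lemma eventually_final_count:
  assumes "sampled_finitely h" shows "eventually (\<lambda>r. c r h = final_count h) sequentially"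
proof -
  obtain N where N: "\<And>r. c r h \<le> N" using assms unfolding sampled_finitely_def by blast
  hence fin: "finite (range (\<lambda>r. c r h))" by (meson finite_atMost finite_subset image_subsetI atMost_iff)
  hence "Max (range (\<lambda>r. c r h)) \<in> range (\<lambda>r. c r h)" by (intro Max_in) auto
  then obtain r0 where r0: "c r0 h = Max (range (\<lambda>r. c r h))" by auto
  have "eventually (\<lambda>r. c r h = c r0 h) sequentially"
    unfolding eventually_sequentially
  proof (intro exI allI impI)
    fix r assume "r0 \<le> r"
    hence "c r0 h \<le> c r h" using incseq_c[of h] by (simp add: incseq_def)
    moreover have "c r h \<le> c r0 h" unfolding r0 using fin by (intro Max_ge) auto
    ultimately show "c r h = c r0 h" by simp
  qed
  thus ?thesis unfolding final_count_def by (rule someI)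
qed

lemma filterlim_c_at_top:
  assumes "\<not> sampled_finitely h" shows "filterlim (\<lambda>r. c r h) at_top sequentially"
  unfolding filterlim_at_top
proof
  fix N :: nat
  obtain r0 where "N < c r0 h" using assms unfolding sampled_finitely_def by (meson not_le)
  thus "eventually (\<lambda>r. N \<le> c r h) sequentially"
    unfolding eventually_sequentially using incseq_c[of h] by (meson incseq_def less_imp_le order_trans)
qed

lemma final_count_pos: assumes "sampled_finitely h" shows "1 \<le> final_count h"
proof -
  obtain r where "c r h = final_count h"
    using eventually_happens'[OF _ eventually_final_count[OF assms]] by auto
  thus ?thesis using c_ge_n0[of r h] n0_pos by linarith
qed

lemma eventually_S_fin_frozen: "eventually (\<lambda>r. \<forall>h\<in>S_fin. c r h = final_count h) sequentially"
  by (rule eventually_ball_finite) (auto simp: S_fin_def intro: eventually_final_count)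

lemma eventually_a_in_S_inf: "eventually (\<lambda>r. a r \<in> S_inf) sequentially"
  using eventually_S_fin_frozen eventually_S_fin_frozen[THEN eventually_sequentially_Suc[THEN iffD2]]
proof eventually_elim
  case (elim r)
  have "c (Suc r) (a r) = c r (a r) + 1" by (simp add: c_Suc del: aoa_counts.simps)
  hence "a r \<notin> S_fin" using elim by auto
  thus ?case using a_less[of r] unfolding S_inf_def S_fin_def by blast
qed

subsection \<open>Limiting posterior means and the limiting top set\<close>

definition "lim_mean h = (if h \<in> S_inf then mu h else PM h (final_count h))"

lemma PM_c_tendsto: assumes "h < k" shows "(\<lambda>r. PM h (c r h)) \<longlonglongrightarrow> lim_mean h"
proof (cases "h \<in> S_inf")
  case True
  hence "filterlim (\<lambda>r. c r h) at_top sequentially" using filterlim_c_at_top unfolding S_inf_def by blast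
  from filterlim_compose[OF PM_tendsto[OF assms] this] show ?thesis using True unfolding lim_mean_def by simp
next
  case False
  hence "sampled_finitely h" using assms unfolding S_inf_def by blast
  have "eventually (\<lambda>r. PM h (c r h) = lim_mean h) sequentially"
    using eventually_final_count[OF \<open>sampled_finitely h\<close>]
    by eventually_elim (use False in \<open>simp add: lim_mean_def\<close>)
  thus ?thesis by (rule tendsto_eventually)
qed

lemma inj_on_lim_mean: "inj_on lim_mean {..<k}"
proof (rule inj_onI, rule ccontr)
  fix h h' assume h: "h \<in> {..<k}" "h' \<in> {..<k}" "lim_mean h = lim_mean h'" "h \<noteq> h'"
  have fin: "1 \<le> final_count g" if "g < k" "g \<notin> S_inf" for g
    using that final_count_pos unfolding S_inf_def by auto
  show False
    using h mu_inj[of h h'] post_mean_ne_mean[of h h' "final_count h"] post_mean_ne_mean[of h' h "final_count h'"]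
      post_means_distinct[of h h' "final_count h" "final_count h'"] fin[of h] fin[of h']
    unfolding lim_mean_def by (auto split: if_splits)
qed

definition "Top = top_set k m lim_mean"
definition "Bot = bot_set k m lim_mean"

lemma Top_Bot:
  "finite Top" "finite Bot" "Top \<noteq> {}" "Bot \<noteq> {}" "Top \<subseteq> {..<k}" "Bot \<subseteq> {..<k}" "Top \<inter> Bot = {}"
proof -
  show "Top \<subseteq> {..<k}" unfolding Top_def by (rule top_set_subset)
  thus "finite Top" using finite_subset by blast
  show "finite Bot" "Bot \<subseteq> {..<k}" "Top \<inter> Bot = {}" unfolding Bot_def Top_def bot_set_def by auto
  show "Top \<noteq> {}" using top_set_nonempty[OF inj_on_lim_mean m_pos] m_less unfolding Top_def by auto
  show "Bot \<noteq> {}" using bot_set_nonempty[OF inj_on_lim_mean m_less] unfolding Bot_def .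
qed

lemma lim_mean_Bot_less_Top: "i \<in> Top \<Longrightarrow> j \<in> Bot \<Longrightarrow> lim_mean j < lim_mean i"
  using top_set_less[OF inj_on_lim_mean, of i m j] unfolding Top_def Bot_def bot_set_def by auto

lemma eventually_top_set_eq_Top: "eventually (\<lambda>r. top_set k m (\<lambda>h. PM h (c r h)) = Top) sequentially"
proof -
  have "eventually (\<lambda>r. \<forall>p\<in>{..<k} \<times> {..<k}.
     (PM (fst p) (c r (fst p)) < PM (snd p) (c r (snd p)) \<longleftrightarrow> lim_mean (fst p) < lim_mean (snd p)) \<and>
     (PM (fst p) (c r (fst p)) = PM (snd p) (c r (snd p)) \<longleftrightarrow> lim_mean (fst p) = lim_mean (snd p))) sequentially"
  proof (rule eventually_ball_finite, simp, intro ballI)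
    fix p assume "p \<in> {..<k} \<times> {..<k}"
    then obtain i j where ij: "p = (i, j)" "i < k" "j < k" by auto
    have lim: "(\<lambda>r. PM j (c r j) - PM i (c r i)) \<longlonglongrightarrow> lim_mean j - lim_mean i"
      using PM_c_tendsto ij by (intro tendsto_intros)
    consider "i = j" | "lim_mean i < lim_mean j" | "lim_mean j < lim_mean i"
      using inj_on_lim_mean ij unfolding inj_on_def by (meson lessThan_iff linorder_neqE_linordered_idom)
    thus "eventually (\<lambda>r. (PM (fst p) (c r (fst p)) < PM (snd p) (c r (snd p)) \<longleftrightarrow> lim_mean (fst p) < lim_mean (snd p)) \<and>
     (PM (fst p) (c r (fst p)) = PM (snd p) (c r (snd p)) \<longleftrightarrow> lim_mean (fst p) = lim_mean (snd p))) sequentially"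
    proof cases
      case 2
      have "eventually (\<lambda>r. 0 < PM j (c r j) - PM i (c r i)) sequentially"
        using lim 2 by (intro order_tendstoD(1)) auto
      thus ?thesis by eventually_elim (use 2 ij in auto)
    next
      case 3
      have "eventually (\<lambda>r. PM j (c r j) - PM i (c r i) < 0) sequentially"
        using lim 3 by (intro order_tendstoD(2)) auto
      thus ?thesis by eventually_elim (use 3 ij in auto)
    qed (use ij in simp)
  qed
  thus ?thesis unfolding Top_def by eventually_elim (rule top_set_cong, auto)
qed

subsection \<open>Limiting AOA-gs values\<close>

text \<open>The candidate argument \<open>b\<close> may be any index; \<open>lim_var k\<close> (with \<open>k\<close> out of range) gives the
  limiting variances when no extra sample is proposed.\<close>

definition "lim_var b h = (if h \<in> S_inf then 0 else if h = b then PV h (final_count h + 1) else PV h (final_count h))"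
definition "lim_gap b i j = (lim_mean i - lim_mean j)\<^sup>2 / (lim_var b i + lim_var b j)"

lemma lim_var_nonneg: "h < k \<Longrightarrow> 0 \<le> lim_var b h"
  unfolding lim_var_def using PV_pos by (auto intro: less_imp_le)

lemma lim_var_pos: "h \<in> S_fin \<Longrightarrow> 0 < lim_var b h"
  unfolding lim_var_def S_fin_def S_inf_def using PV_pos by auto

lemma lim_var_S_inf: "b \<in> S_inf \<Longrightarrow> h < k \<Longrightarrow> lim_var b h = lim_var k h"
  unfolding lim_var_def S_inf_def by auto

lemma cand_var_tendsto: assumes "h < k" shows "(\<lambda>r. cand_var r b h) \<longlonglongrightarrow> lim_var b h"
proof (cases "h \<in> S_inf")
  case True
  define d where "d = (if h = b then 1 else 0::nat)"
  have eq: "(\<lambda>r. cand_var r b h) = (\<lambda>r. PV h (c r h + d))" unfolding cand_var_def d_def by auto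
  have "filterlim (\<lambda>r. c r h) at_top sequentially" using True filterlim_c_at_top unfolding S_inf_def by blast
  hence "filterlim (\<lambda>r. c r h + d) at_top sequentially"
    by (rule filterlim_at_top_mono) simp
  from filterlim_compose[OF PV_tendsto_0[OF assms] this]
  show ?thesis unfolding eq using True unfolding lim_var_def by simp
next
  case False
  hence "sampled_finitely h" using assms unfolding S_inf_def by blast
  have "eventually (\<lambda>r. cand_var r b h = lim_var b h) sequentially"
    using eventually_final_count[OF \<open>sampled_finitely h\<close>]
    by eventually_elim (use False in \<open>auto simp add: cand_var_def lim_var_def\<close>)
  thus ?thesis by (rule tendsto_eventually)
qed

lemma gap_ratio_tendsto:
  assumes "i < k" "j < k" "i \<in> S_fin \<or> j \<in> S_fin"
  shows "(\<lambda>r. gap_ratio r b i j) \<longlonglongrightarrow> lim_gap b i j"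
proof -
  have "lim_var b i + lim_var b j \<noteq> 0"
    using assms lim_var_nonneg[of i b] lim_var_nonneg[of j b] lim_var_pos[of i b] lim_var_pos[of j b] by auto
  thus ?thesis unfolding gap_ratio_def lim_gap_def using assms PM_c_tendsto cand_var_tendsto
    by (intro tendsto_intros) auto
qed

lemma gap_ratio_unbounded:
  assumes "i \<in> S_inf" "j \<in> S_inf" "i \<noteq> j"
  shows "eventually (\<lambda>r. \<theta> < gap_ratio r b i j) sequentially"
proof -
  have ij: "i < k" "j < k" using assms unfolding S_inf_def by auto
  have "lim_mean i \<noteq> lim_mean j" using inj_on_lim_mean ij assms(3) unfolding inj_on_def by auto
  hence pos: "(lim_mean i - lim_mean j)\<^sup>2 > 0" by simp
  have num: "(\<lambda>r. (PM i (c r i) - PM j (c r j))\<^sup>2) \<longlonglongrightarrow> (lim_mean i - lim_mean j)\<^sup>2"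
    using PM_c_tendsto ij by (intro tendsto_intros)
  have "(\<lambda>r. cand_var r b i + cand_var r b j) \<longlonglongrightarrow> lim_var b i + lim_var b j"
    using cand_var_tendsto ij by (intro tendsto_intros)
  moreover have "lim_var b i + lim_var b j = 0" using assms unfolding lim_var_def by simp
  ultimately have den: "(\<lambda>r. cand_var r b i + cand_var r b j) \<longlonglongrightarrow> 0" by simp
  have "eventually (\<lambda>r. 0 < cand_var r b i + cand_var r b j) sequentially"
    using cand_var_pos ij by (intro always_eventually) (auto intro: add_pos_pos)
  from eventually_gt_divide_tendsto_0[OF num pos den this] show ?thesis unfolding gap_ratio_def .
qed

lemma Vh_eq_max_min:
  assumes "top_set k m (\<lambda>h. PM h (c r h)) = Top"
  shows "Vh r b = max_min Top Bot (gap_ratio r b)"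
proof -
  have "pmeans mu0 sigma0 sigma X w (c r) = (\<lambda>h. PM h (c r h))"
    unfolding pmeans_def post_mean_after_def by (simp add: fun_eq_iff)
  thus ?thesis using assms
    unfolding Vhat_def V_val_eq_max_min Bot_def bot_set_def gap_ratio_def cand_var_def by (simp add: Top_def)
qed

text \<open>\<open>partners i\<close> are the bottom alternatives whose gap ratio with \<open>i\<close> stays bounded; \<open>lim_value\<close>
  is the limit of the AOA-gs value of every infinitely sampled candidate.\<close>

definition "partners i = {j \<in> Bot. i \<in> S_fin \<or> j \<in> S_fin}"
definition "lim_min_gap i = Min (lim_gap k i ` partners i)"
definition "lim_value = Max (lim_min_gap ` Top)"

lemma finite_partners: "finite (partners i)"
  using Top_Bot(2) unfolding partners_def by auto

lemma partners_subset_Bot: "partners i \<subseteq> Bot"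
  unfolding partners_def by auto

lemma partners_nonempty:
  assumes "best \<notin> Top" "i \<in> Top" shows "partners i \<noteq> {}"
proof (cases "best \<in> S_inf")
  case True
  have best_Bot: "best \<in> Bot" using assms(1) best_less unfolding Bot_def Top_def bot_set_def by auto
  have "i \<notin> S_inf"
  proof
    assume "i \<in> S_inf"
    hence "lim_mean best < mu i" using lim_mean_Bot_less_Top[OF assms(2) best_Bot] unfolding lim_mean_def by simp
    thus False using True best_max[of i] \<open>i \<in> S_inf\<close> unfolding lim_mean_def S_inf_def by simp
  qed
  hence "i \<in> S_fin" using assms(2) Top_Bot(5) unfolding S_fin_def S_inf_def by auto
  thus ?thesis using Top_Bot(4) unfolding partners_def by auto
next
  case False
  hence "best \<in> S_fin" using best_less unfolding S_inf_def S_fin_def by auto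
  moreover have "best \<in> Bot" using assms(1) best_less unfolding Bot_def Top_def bot_set_def by auto
  ultimately show ?thesis unfolding partners_def by auto
qed

lemma lim_min_gap_le: "j \<in> partners i \<Longrightarrow> lim_min_gap i \<le> lim_gap k i j"
  unfolding lim_min_gap_def using finite_partners by (intro Min_le) auto

lemma lim_min_gap_attained:
  assumes "best \<notin> Top" "i \<in> Top" shows "\<exists>j\<in>partners i. lim_gap k i j = lim_min_gap i"
proof -
  have "lim_min_gap i \<in> lim_gap k i ` partners i"
    unfolding lim_min_gap_def using finite_partners partners_nonempty[OF assms] by (intro Min_in) auto
  thus ?thesis by auto
qed

lemma lim_value_attained: "\<exists>i\<in>Top. lim_min_gap i = lim_value"
proof -
  have "lim_value \<in> lim_min_gap ` Top" unfolding lim_value_def using Top_Bot by (intro Max_in) auto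
  thus ?thesis by auto
qed

lemma lim_min_gap_le_lim_value: "i \<in> Top \<Longrightarrow> lim_min_gap i \<le> lim_value"
  unfolding lim_value_def using Top_Bot(1) by (intro Max_ge) auto

lemma lim_gap_num_pos: "i \<in> Top \<Longrightarrow> j \<in> Bot \<Longrightarrow> 0 < (lim_mean i - lim_mean j)\<^sup>2"
  using lim_mean_Bot_less_Top[of i j] by simp

lemma improving_candidate_S_fin:
  assumes "ist \<in> Top" "lim_min_gap ist = lim_value" "ist \<in> S_fin" "j \<in> partners ist"
  shows "lim_value < lim_gap ist ist j"
proof -
  have jB: "j \<in> Bot" using assms(4) partners_subset_Bot by blast
  have j: "j < k" "j \<noteq> ist" using jB assms(1) Top_Bot(6,7) by auto
  have ist: "ist < k" "ist \<notin> S_inf" using assms(3) unfolding S_fin_def S_inf_def by auto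
  have "lim_var ist ist < lim_var k ist"
    using PV_Suc_less[OF ist(1)] ist j(1) unfolding lim_var_def by auto
  moreover have "lim_var ist j = lim_var k j" using j unfolding lim_var_def by auto
  moreover have "0 < lim_var ist ist" using lim_var_pos[OF assms(3)] .
  moreover have "0 \<le> lim_var k j" using lim_var_nonneg[OF j(1)] .
  ultimately have "lim_gap k ist j < lim_gap ist ist j"
    unfolding lim_gap_def using lim_gap_num_pos[OF assms(1) jB]
    by (intro divide_strict_left_mono) (auto intro: add_pos_nonneg)
  moreover have "lim_value \<le> lim_gap k ist j" using lim_min_gap_le[OF assms(4)] assms(2) by simp
  ultimately show ?thesis by simp
qed

text \<open>If the maximising top alternative is sampled infinitely often, all its partners are sampled
  finitely often. Sampling the partner that attains the minimum raises its own gap ratio, and all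
  other partners already have strictly larger gap ratios: ties are excluded by
  \<open>weighted_gaps_distinct\<close>.\<close>

lemma improving_candidate_S_inf:
  assumes "best \<notin> Top" "ist \<in> Top" "lim_min_gap ist = lim_value" "ist \<in> S_inf"
  shows "\<exists>u\<in>S_fin. \<forall>j\<in>partners ist. lim_value < lim_gap u ist j"
proof -
  obtain u where u: "u \<in> partners ist" "lim_gap k ist u = lim_value"
    using lim_min_gap_attained[OF assms(1,2)] assms(3) by auto
  have partners_fin: "j \<in> S_fin" if "j \<in> partners ist" for j
    using that assms(4) unfolding partners_def S_fin_def S_inf_def by auto
  have ist: "ist < k" "lim_mean ist = mu ist" "lim_var u ist = 0" "lim_var k ist = 0"
    using assms(4) unfolding S_inf_def lim_mean_def lim_var_def by auto
  have fin_data: "g < k" "lim_mean g = PM g (final_count g)" "lim_var k g = PV g (final_count g)"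
    "1 \<le> final_count g" if "g \<in> S_fin" for g
    using that final_count_pos unfolding S_fin_def S_inf_def lim_mean_def lim_var_def by auto
  note uf = fin_data[OF partners_fin[OF u(1)]]
  show ?thesis
  proof (intro bexI[OF _ partners_fin[OF u(1)]] ballI)
    fix j assume j: "j \<in> partners ist"
    have jB: "j \<in> Bot" using j partners_subset_Bot by auto
    note jf = fin_data[OF partners_fin[OF j]]
    show "lim_value < lim_gap u ist j"
    proof (cases "j = u")
      case True
      have "lim_var u u = PV u (final_count u + 1)"
        using partners_fin[OF u(1)] unfolding lim_var_def S_fin_def S_inf_def by auto
      hence "lim_var u u < lim_var k u" using PV_Suc_less[OF uf(1)] uf(3) by simp
      moreover have "0 < (mu ist - lim_mean u)\<^sup>2"
        using lim_gap_num_pos[OF assms(2), of u] jB True ist(2) by simp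
      ultimately have "lim_gap k ist u < lim_gap u ist u"
        unfolding lim_gap_def ist using lim_var_pos[OF partners_fin[OF u(1)]]
        by (intro divide_strict_left_mono) auto
      thus ?thesis using True u(2) by simp
    next
      case False
      have ne: "lim_gap k ist j \<noteq> lim_gap k ist u"
      proof
        assume "lim_gap k ist j = lim_gap k ist u"
        hence "(mu ist - PM j (final_count j))\<^sup>2 / PV j (final_count j) =
               (mu ist - PM u (final_count u))\<^sup>2 / PV u (final_count u)"
          unfolding lim_gap_def ist jf(2,3) uf(2,3) by simp
        hence "(mu ist - PM j (final_count j))\<^sup>2 * PV u (final_count u) =
               (mu ist - PM u (final_count u))\<^sup>2 * PV j (final_count j)"
          using PV_pos[OF jf(1), of "final_count j"] PV_pos[OF uf(1), of "final_count u"]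
          by (simp add: field_simps)
        thus False using weighted_gaps_distinct[OF ist(1) jf(1) uf(1) False jf(4) uf(4)] by simp
      qed
      have "lim_value < lim_gap k ist j" using lim_min_gap_le[OF j] u assms(3) ne by (simp add: order_le_less)
      also have "lim_gap k ist j = lim_gap u ist j"
        unfolding lim_gap_def ist using False jf(1) unfolding lim_var_def by auto
      finally show ?thesis .
    qed
  qed
qed

lemma improving_candidate:
  assumes "best \<notin> Top"
  obtains ist u where "ist \<in> Top" "u \<in> S_fin" "\<And>j. j \<in> partners ist \<Longrightarrow> lim_value < lim_gap u ist j"
proof -
  obtain ist where ist: "ist \<in> Top" "lim_min_gap ist = lim_value" using lim_value_attained by blast
  have "ist \<in> S_fin \<or> ist \<in> S_inf" using ist(1) Top_Bot(5) unfolding S_fin_def S_inf_def by auto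
  thus thesis
    using that[OF ist(1)] improving_candidate_S_fin[OF ist] improving_candidate_S_inf[OF assms ist] by blast
qed

lemma eventually_S_inf_values_below:
  assumes "best \<notin> Top" "lim_value < \<theta>"
  shows "eventually (\<lambda>r. \<forall>b\<in>S_inf. \<forall>i\<in>Top. \<exists>j\<in>Bot. gap_ratio r b i j < \<theta>) sequentially"
proof (rule eventually_ball_finite)
  show "finite S_inf" unfolding S_inf_def by auto
  show "\<forall>b\<in>S_inf. eventually (\<lambda>r. \<forall>i\<in>Top. \<exists>j\<in>Bot. gap_ratio r b i j < \<theta>) sequentially"
  proof
  fix b assume b: "b \<in> S_inf"
  show "eventually (\<lambda>r. \<forall>i\<in>Top. \<exists>j\<in>Bot. gap_ratio r b i j < \<theta>) sequentially"
  proof (rule eventually_ball_finite[OF Top_Bot(1)], rule ballI)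
    fix i assume i: "i \<in> Top"
    obtain j where j: "j \<in> partners i" "lim_gap k i j = lim_min_gap i"
      using lim_min_gap_attained[OF assms(1) i] by blast
    have ij: "i < k" "j < k" "j \<in> Bot" "i \<in> S_fin \<or> j \<in> S_fin"
      using i j partners_subset_Bot Top_Bot unfolding partners_def by auto
    have "lim_gap b i j = lim_gap k i j" unfolding lim_gap_def using lim_var_S_inf[OF b] ij by simp
    also have "\<dots> < \<theta>" using j lim_min_gap_le_lim_value[OF i] assms(2) by simp
    finally have "eventually (\<lambda>r. gap_ratio r b i j < \<theta>) sequentially"
      using gap_ratio_tendsto[OF ij(1,2,4), of b] by (intro order_tendstoD(2))
    thus "eventually (\<lambda>r. \<exists>j\<in>Bot. gap_ratio r b i j < \<theta>) sequentially"
      by (rule eventually_mono) (use ij in blast)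
  qed
  qed
qed

lemma eventually_value_above:
  assumes "ist \<in> Top" "\<And>j. j \<in> partners ist \<Longrightarrow> \<theta> < lim_gap u ist j"
  shows "eventually (\<lambda>r. \<forall>j\<in>Bot. \<theta> < gap_ratio r u ist j) sequentially"
proof (rule eventually_ball_finite[OF Top_Bot(2)], rule ballI)
  fix j assume j: "j \<in> Bot"
  have ij: "ist < k" "j < k" "j \<noteq> ist" using assms(1) j Top_Bot by auto
  show "eventually (\<lambda>r. \<theta> < gap_ratio r u ist j) sequentially"
  proof (cases "ist \<in> S_fin \<or> j \<in> S_fin")
    case True
    hence "\<theta> < lim_gap u ist j" using j assms(2) unfolding partners_def by auto
    thus ?thesis using gap_ratio_tendsto[OF ij(1,2) True, of u] by (intro order_tendstoD(1))
  next
    case False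
    hence "ist \<in> S_inf" "j \<in> S_inf" using ij unfolding S_fin_def S_inf_def by auto
    thus ?thesis using gap_ratio_unbounded ij(3) by metis
  qed
qed

lemma finite_greater_ex_between:
  fixes x :: real
  assumes "finite A" "\<And>y. y \<in> A \<Longrightarrow> x < y"
  obtains \<theta> where "x < \<theta>" "\<And>y. y \<in> A \<Longrightarrow> \<theta> < y"
proof
  let ?z = "Min (insert (x + 1) A)"
  have z: "x < ?z" using assms by (subst Min_gr_iff) auto
  show "x < (x + ?z) / 2" using z by simp
  show "(x + ?z) / 2 < y" if "y \<in> A" for y
  proof -
    have "?z \<le> y" using assms(1) that by (intro Min_le) auto
    thus ?thesis using assms(2)[OF that] by simp
  qed
qed

lemma best_in_Top: "best \<in> Top"
proof (rule ccontr)
  assume best: "best \<notin> Top"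
  obtain ist u where ist: "ist \<in> Top" and u: "u \<in> S_fin"
    and gt: "\<And>j. j \<in> partners ist \<Longrightarrow> lim_value < lim_gap u ist j"
    using improving_candidate[OF best] by blast
  have "finite (lim_gap u ist ` partners ist)" using finite_partners by blast
  then obtain \<theta> where "lim_value < \<theta>" "\<And>y. y \<in> lim_gap u ist ` partners ist \<Longrightarrow> \<theta> < y"
    by (rule finite_greater_ex_between) (use gt in blast)+
  hence \<theta>: "lim_value < \<theta>" "\<And>j. j \<in> partners ist \<Longrightarrow> \<theta> < lim_gap u ist j" by auto
  have above: "eventually (\<lambda>r. \<forall>j\<in>Bot. \<theta> < gap_ratio r u ist j) sequentially"
    using ist \<theta>(2) by (rule eventually_value_above)
  have "eventually (\<lambda>r. False) sequentially"
    using eventually_S_inf_values_below[OF best \<theta>(1)] above eventually_a_in_S_inf eventually_top_set_eq_Top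
  proof eventually_elim
    case (elim r)
    have "Vh r (a r) = max_min Top Bot (gap_ratio r (a r))" using elim(4) by (rule Vh_eq_max_min)
    also have "\<dots> < \<theta>" using Top_Bot(1-3) elim(1,3) by (intro max_min_less) blast+
    finally have "Vh r (a r) < \<theta>" .
    have "\<theta> < max_min Top Bot (gap_ratio r u)" using Top_Bot(1,2,4) ist elim(2) by (intro max_min_greater) blast+
    also have "\<dots> = Vh r u" using elim(4) by (rule Vh_eq_max_min[symmetric])
    also have "Vh r u \<le> Vh r (a r)" using a_max u unfolding S_fin_def by blast
    finally show False using \<open>Vh r (a r) < \<theta>\<close> by simp
  qed
  thus False by simp
qed

theorem eventually_best_in_top_set:
  "\<exists>r0. \<forall>r\<ge>r0. best \<in> top_set k m (pmeans mu0 sigma0 sigma X w (c r))"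
proof -
  have "pmeans mu0 sigma0 sigma X w (c r) = (\<lambda>h. PM h (c r h))" for r
    unfolding pmeans_def post_mean_after_def by (simp add: fun_eq_iff)
  with eventually_top_set_eq_Top
  have "eventually (\<lambda>r. best \<in> top_set k m (pmeans mu0 sigma0 sigma X w (c r))) sequentially"
    by (auto elim!: eventually_mono simp: best_in_Top)
  thus ?thesis unfolding eventually_sequentially by blast
qed

end

subsection \<open>Null events for Gaussian samples\<close>

context prob_space
begin

lemma AE_distributed_ne_const:
  assumes "distributed M lborel Y f"
  shows "AE w in M. Y w \<noteq> c"
proof -
  have "AE y in density lborel f. y \<noteq> c"
    using AE_lborel_singleton[of c] distributed_borel_measurable[OF assms]
    by (subst AE_density) (auto elim: eventually_mono)
  hence "AE y in distr M lborel Y. y \<noteq> c" unfolding distributed_distr_eq_density[OF assms] .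
  thus ?thesis by (rule AE_distrD[OF distributed_measurable[OF assms]])
qed

text \<open>By Fubini on the joint law, which is the product of the marginals.\<close>

lemma AE_indep_ne_fun:
  fixes Y Z :: "'a \<Rightarrow> real"
  assumes ind: "indep_var borel Z borel Y" and dY: "distributed M lborel Y f"
    and g: "g \<in> borel_measurable borel"
  shows "AE w in M. Y w \<noteq> g (Z w)"
proof -
  have rv: "random_variable borel Z" "random_variable borel Y"
    and eq: "distr M borel Z \<Otimes>\<^sub>M distr M borel Y = distr M (borel \<Otimes>\<^sub>M borel) (\<lambda>x. (Z x, Y x))"
    using ind unfolding indep_var_distribution_eq by auto
  interpret PZ: prob_space "distr M borel Z" by (rule prob_space_distr) fact
  interpret PY: prob_space "distr M borel Y" by (rule prob_space_distr) fact
  interpret PP: pair_prob_space "distr M borel Z" "distr M borel Y" ..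
  have fm: "f \<in> borel_measurable lborel" using distributed_borel_measurable[OF dY] .
  have dYe: "distr M borel Y = density lborel f"
    using distributed_distr_eq_density[OF dY] by (metis distr_cong sets_lborel)
  have inner: "AE y in distr M borel Y. y \<noteq> g z" for z
    unfolding dYe using AE_lborel_singleton[of "g z"] fm
    by (subst AE_density) (auto elim: eventually_mono)
  have "AE x in distr M borel Z \<Otimes>\<^sub>M distr M borel Y. snd x \<noteq> g (fst x)"
  proof (rule PP.AE_pair_measure)
    have "{x \<in> space (borel \<Otimes>\<^sub>M borel). snd x \<noteq> g (fst x)} \<in> sets (borel \<Otimes>\<^sub>M (borel :: real measure))"
      using g by measurable
    moreover have "sets (distr M borel Z \<Otimes>\<^sub>M distr M borel Y) = sets (borel \<Otimes>\<^sub>M (borel :: real measure))"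
      by (intro sets_pair_measure_cong) auto
    moreover have "space (distr M borel Z \<Otimes>\<^sub>M distr M borel Y) = space (borel \<Otimes>\<^sub>M (borel :: real measure))"
      by (simp add: space_pair_measure)
    ultimately show "{x \<in> space (distr M borel Z \<Otimes>\<^sub>M distr M borel Y). snd x \<noteq> g (fst x)}
        \<in> sets (distr M borel Z \<Otimes>\<^sub>M distr M borel Y)" by simp
    show "AE x in distr M borel Z. AE y in distr M borel Y. snd (x, y) \<noteq> g (fst (x, y))"
      using inner by simp
  qed
  hence "AE x in distr M (borel \<Otimes>\<^sub>M borel) (\<lambda>x. (Z x, Y x)). snd x \<noteq> g (fst x)"
    unfolding eq .
  moreover have "(\<lambda>x. (Z x, Y x)) \<in> measurable M (borel \<Otimes>\<^sub>M borel)" using rv by (auto intro: measurable_Pair)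
  ultimately show ?thesis by (auto dest: AE_distrD)
qed

subsection \<open>A strong law of large numbers for Gaussian partial sums\<close>

lemma normal_fourth_moment:
  assumes "s > 0" "distributed M lborel D (normal_density 0 s)"
  shows "integrable M (\<lambda>w. D w ^ 4)" "(\<integral>w. D w ^ 4 \<partial>M) = 3 * s ^ 4"
proof -
  have hb: "has_bochner_integral lborel (\<lambda>x. normal_density 0 s x * (x - 0) ^ (2 * 2))
      (fact (2 * 2) / ((2 / s\<^sup>2) ^ 2 * fact 2))"
    using normal_moment_even[of s 0 2] assms(1) by simp
  have val: "fact (2 * 2) / ((2 / s\<^sup>2) ^ 2 * fact 2) = 3 * s ^ 4"
    using assms(1) by (simp add: fact_numeral field_simps power2_eq_square power4_eq_xxxx)
  have int: "integrable lborel (\<lambda>x. normal_density 0 s x * x ^ 4)"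
    using hb by (simp add: has_bochner_integral_iff)
  show "integrable M (\<lambda>w. D w ^ 4)"
    using int distributed_integrable[OF assms(2), of "\<lambda>x. x ^ 4"] by simp
  have "(\<integral>x. normal_density 0 s x * x ^ 4 \<partial>lborel) = 3 * s ^ 4"
    using hb val by (simp add: has_bochner_integral_iff)
  moreover have "(\<integral>x. normal_density 0 s x * x ^ 4 \<partial>lborel) = (\<integral>w. D w ^ 4 \<partial>M)"
    using distributed_integral[OF assms(2), of "\<lambda>x. x ^ 4"] by simp
  ultimately show "(\<integral>w. D w ^ 4 \<partial>M) = 3 * s ^ 4" by simp
qed

context
  fixes S :: "nat \<Rightarrow> 'a \<Rightarrow> real" and \<mu> \<sigma> :: real
  assumes S_normal: "\<And>n. 1 \<le> n \<Longrightarrow> distributed M lborel (S n) (normal_density (real n * \<mu>) (sqrt (real n) * \<sigma>))"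
    and sigma_pos: "\<sigma> > 0"
begin

lemma normal_sum_centered:
  assumes "1 \<le> n" shows "distributed M lborel (\<lambda>w. S n w - real n * \<mu>) (normal_density 0 (sqrt (real n) * \<sigma>))"
proof -
  have "0 < sqrt (real n) * \<sigma>" using assms sigma_pos by simp
  from normal_density_affine[OF S_normal[OF assms] this, of 1 "- (real n * \<mu>)"]
  show ?thesis by simp
qed

text \<open>Markov's inequality for the fourth power: the tail probabilities are \<open>O(1/n\<^sup>2)\<close>, hence summable.\<close>

lemma normal_sum_deviation_bound:
  assumes n: "1 \<le> n" and e: "e > 0"
  shows "measure M {w\<in>space M. (real n * e) ^ 4 \<le> (S n w - real n * \<mu>) ^ 4}
           \<le> 3 * \<sigma> ^ 4 / e ^ 4 * inverse (real n ^ 2)"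
proof -
  have pos: "0 < sqrt (real n) * \<sigma>" using n sigma_pos by simp
  note mom = normal_fourth_moment[OF pos normal_sum_centered[OF n]]
  have "measure M {w\<in>space M. (real n * e) ^ 4 \<le> (S n w - real n * \<mu>) ^ 4}
      \<le> (\<integral>w. (S n w - real n * \<mu>) ^ 4 \<partial>M) / (real n * e) ^ 4"
    using mom n e by (intro integral_Markov_inequality_measure[where A="space M"]) auto
  also have "\<dots> = 3 * (sqrt (real n) * \<sigma>) ^ 4 / (real n * e) ^ 4"
    using mom by simp
  also have "(sqrt (real n) * \<sigma>) ^ 4 = real n ^ 2 * \<sigma> ^ 4"
    by (simp add: power_mult_distrib power4_eq_xxxx power2_eq_square)
  also have "3 * (real n ^ 2 * \<sigma> ^ 4) / (real n * e) ^ 4 = 3 * \<sigma> ^ 4 / e ^ 4 * inverse (real n ^ 2)"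
    using n e by (simp add: field_simps power2_eq_square power4_eq_xxxx)
  finally show ?thesis .
qed

lemma AE_eventually_deviation_less:
  assumes e: "e > 0"
  shows "AE w in M. eventually (\<lambda>n. \<bar>S (Suc n) w / real (Suc n) - \<mu>\<bar> < e) sequentially"
proof -
  define D where "D n w = S n w - real n * \<mu>" for n w
  define A where "A n = {w\<in>space M. (real (Suc n) * e) ^ 4 \<le> D (Suc n) w ^ 4}" for n
  have "AE w in M. eventually (\<lambda>n. w \<in> space M - A n) sequentially"
  proof (rule borel_cantelli_AE1)
    show "A n \<in> sets M" for n
    proof -
      have "D (Suc n) \<in> borel_measurable M"
        using distributed_measurable[OF normal_sum_centered[of "Suc n"]] unfolding D_def by simp
      hence "(\<lambda>w. D (Suc n) w ^ 4) \<in> borel_measurable M" by (rule borel_measurable_power)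
      moreover have "A n = (\<lambda>w. D (Suc n) w ^ 4) -` {(real (Suc n) * e) ^ 4..} \<inter> space M"
        unfolding A_def by auto
      ultimately show ?thesis by (metis measurable_sets borel_closed closed_atLeast)
    qed
    show "emeasure M (A n) < \<infinity>" for n by (simp add: emeasure_eq_measure)
    have "summable (\<lambda>n. inverse (real n ^ 2))" using inverse_power_summable[of 2, where 'a=real] by simp
    hence "summable (\<lambda>n. (\<lambda>n. inverse (real n ^ 2)) (Suc n))" by (subst summable_Suc_iff)
    hence "summable (\<lambda>n. inverse (real (Suc n) ^ 2))" by (simp only:)
    hence "summable (\<lambda>n. 3 * \<sigma> ^ 4 / e ^ 4 * inverse (real (Suc n) ^ 2))" by (rule summable_mult)
    thus "summable (\<lambda>n. measure M (A n))"
    proof (rule summable_comparison_test'[where N=0])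
      fix n :: nat
      have "measure M (A n) \<le> 3 * \<sigma> ^ 4 / e ^ 4 * inverse (real (Suc n) ^ 2)"
        unfolding A_def D_def by (rule normal_sum_deviation_bound[OF _ e]) simp
      thus "norm (measure M (A n)) \<le> 3 * \<sigma> ^ 4 / e ^ 4 * inverse (real (Suc n) ^ 2)" by simp
    qed
  qed
  thus ?thesis
  proof (rule eventually_mono, elim eventually_mono)
    fix w n assume "w \<in> space M - A n"
    hence "\<not> (real (Suc n) * e) ^ 4 \<le> D (Suc n) w ^ 4" unfolding A_def by blast
    hence "\<bar>D (Suc n) w\<bar> ^ 4 < (real (Suc n) * e) ^ 4"
      by (simp only: not_le power_even_abs_numeral even_numeral)
    hence "\<bar>D (Suc n) w\<bar> < real (Suc n) * e"
      by (rule power_less_imp_less_base) (use e in simp)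
    moreover have "S (Suc n) w / real (Suc n) - \<mu> = D (Suc n) w / real (Suc n)"
      unfolding D_def by (simp add: diff_divide_distrib)
    ultimately show "\<bar>S (Suc n) w / real (Suc n) - \<mu>\<bar> < e"
      by (simp add: abs_divide divide_less_eq mult.commute)
  qed
qed

lemma AE_normal_sums_averages_tendsto: "AE w in M. (\<lambda>n. S n w / real n) \<longlonglongrightarrow> \<mu>"
proof -
  have "AE w in M. \<forall>j::nat. eventually (\<lambda>n. \<bar>S (Suc n) w / real (Suc n) - \<mu>\<bar> < inverse (real (Suc j))) sequentially"
    unfolding AE_all_countable by (intro allI AE_eventually_deviation_less) simp
  thus ?thesis
  proof (rule eventually_mono)
    fix w assume H: "\<forall>j::nat. eventually (\<lambda>n. \<bar>S (Suc n) w / real (Suc n) - \<mu>\<bar> < inverse (real (Suc j))) sequentially"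
    have "(\<lambda>n. S (Suc n) w / real (Suc n)) \<longlonglongrightarrow> \<mu>"
    proof (rule tendstoI)
      fix r :: real assume "0 < r"
      then obtain j :: nat where j: "inverse (real (Suc j)) < r" using reals_Archimedean by blast
      show "eventually (\<lambda>n. dist (S (Suc n) w / real (Suc n)) \<mu> < r) sequentially"
        using H[rule_format, of j] by eventually_elim (use j in \<open>simp add: dist_real_def\<close>)
    qed
    thus "(\<lambda>n. S n w / real n) \<longlonglongrightarrow> \<mu>" by (rule LIMSEQ_imp_Suc)
  qed
qed

end

end

subsection \<open>Gaussian partial sums and genericity of the posterior quantities\<close>

lemma sum_singleton_times: "(\<Sum>p\<in>{j} \<times> A. g p) = (\<Sum>i\<in>A. g (j, i))"
proof -
  have "{j} \<times> A = Pair j ` A" by auto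
  moreover have "inj_on (Pair j) A" by (auto simp: inj_on_def)
  ultimately show ?thesis by (simp add: sum.reindex)
qed

locale gaussian_samples = prob_space M for M :: "'w measure" +
  fixes k :: nat and mu sigma :: "nat \<Rightarrow> real" and X :: "nat \<Rightarrow> nat \<Rightarrow> 'w \<Rightarrow> real"
  assumes sigma_pos: "\<And>h. h < k \<Longrightarrow> sigma h > 0"
    and sample_normal: "\<And>h i. h < k \<Longrightarrow> distributed M lborel (X h i) (normal_density (mu h) (sigma h))"
    and samples_indep: "indep_vars (\<lambda>_. borel) (\<lambda>(h, i). X h i) ({..<k} \<times> UNIV)"
begin

lemma partial_sum_normal:
  assumes h: "h < k" and n: "1 \<le> n"
  shows "distributed M lborel (\<lambda>w. \<Sum>i<n. X h i w) (normal_density (real n * mu h) (sqrt (real n) * sigma h))"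
proof -
  let ?I = "{h} \<times> {..<n}"
  have "distributed M lborel (\<lambda>x. \<Sum>p\<in>?I. (\<lambda>(h, i). X h i) p x)
      (normal_density (\<Sum>p\<in>?I. mu (fst p)) (sqrt (\<Sum>p\<in>?I. (sigma (fst p))\<^sup>2)))"
  proof (rule sum_indep_normal)
    have "(h, 0) \<in> ?I" using n by simp
    thus "?I \<noteq> {}" by blast
    show "indep_vars (\<lambda>i. borel) (\<lambda>(h, i). X h i) ?I" using h by (intro indep_vars_subset[OF samples_indep]) auto
    show "\<And>p. p \<in> ?I \<Longrightarrow> 0 < sigma (fst p)" using sigma_pos h by auto
    show "\<And>p. p \<in> ?I \<Longrightarrow> distributed M lborel ((\<lambda>(h, i). X h i) p) (normal_density (mu (fst p)) (sigma (fst p)))"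
      using sample_normal h by auto
  qed simp
  moreover have "sqrt (real n * (sigma h)\<^sup>2) = sqrt (real n) * sigma h"
    using sigma_pos[OF h] by (simp add: real_sqrt_mult)
  ultimately show ?thesis by (simp add: sum_singleton_times)
qed

lemma partial_sums_indep:
  assumes "h < k" "h' < k" "h \<noteq> h'"
  shows "indep_var borel (\<lambda>w. \<Sum>i<n. X h i w) borel (\<lambda>w. \<Sum>i<n'. X h' i w)"
proof -
  let ?A = "{h} \<times> {..<n}" and ?B = "{h'} \<times> {..<n'}"
  have "indep_var borel ((\<lambda>f. \<Sum>p\<in>?A. f p) \<circ> (\<lambda>\<omega>. restrict (\<lambda>p. (\<lambda>(h, i). X h i) p \<omega>) ?A))
                  borel ((\<lambda>f. \<Sum>p\<in>?B. f p) \<circ> (\<lambda>\<omega>. restrict (\<lambda>p. (\<lambda>(h, i). X h i) p \<omega>) ?B))"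
    using assms by (intro indep_var_compose[OF indep_var_restrict[OF samples_indep]]) auto
  moreover have "((\<lambda>f. \<Sum>p\<in>{j} \<times> {..<l}. f p) \<circ> (\<lambda>\<omega>. restrict (\<lambda>p. (\<lambda>(h, i). X h i) p \<omega>) ({j} \<times> {..<l})))
      = (\<lambda>w. \<Sum>i<l. X j i w)" for j l
    by (auto simp: fun_eq_iff sum_singleton_times)
  ultimately show ?thesis by simp
qed

lemma AE_sample_means_tendsto: "AE w in M. \<forall>h<k. (\<lambda>n. (\<Sum>i<n. X h i w) / real n) \<longlonglongrightarrow> mu h"
proof -
  have "AE w in M. \<forall>h\<in>{..<k}. (\<lambda>n. (\<Sum>i<n. X h i w) / real n) \<longlonglongrightarrow> mu h"
    using partial_sum_normal sigma_pos by (intro AE_finite_allI AE_normal_sums_averages_tendsto) auto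
  thus ?thesis by (rule eventually_mono) auto
qed

end

locale gaussian_samples_prior = gaussian_samples +
  fixes prior_mu prior_sigma :: "nat \<Rightarrow> real"
  assumes prior_sigma_pos: "\<And>h. h < k \<Longrightarrow> prior_sigma h > 0"
begin

abbreviation "pmean w h n \<equiv> post_mean_after prior_mu prior_sigma sigma X w h n"

text \<open>The posterior mean is a non-degenerate affine function of the partial sum, which has a density.\<close>

lemma post_mean_after_eq_iff:
  assumes "h < k"
  shows "pmean w h n = t \<longleftrightarrow> (\<Sum>i<n. X h i w) =
    (t - post_var (prior_sigma h) (sigma h) n * (prior_mu h / (prior_sigma h)\<^sup>2)) / (post_var (prior_sigma h) (sigma h) n / (sigma h)\<^sup>2)"
  unfolding post_mean_after_def by (rule post_mean_eq_iff[OF prior_sigma_pos[OF assms] sigma_pos[OF assms]])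

lemma AE_post_mean_after_ne_const:
  assumes "h < k" "1 \<le> n" shows "AE w in M. pmean w h n \<noteq> t"
  using AE_distributed_ne_const[OF partial_sum_normal[OF assms]] by (simp add: post_mean_after_eq_iff[OF assms(1)])

lemma AE_post_mean_after_ne_fun:
  assumes "h < k" "j < k" "h \<noteq> j" "1 \<le> n" "g \<in> borel_measurable borel"
  shows "AE w in M. pmean w h n \<noteq> g (\<Sum>i<n'. X j i w)"
proof -
  have "AE w in M. (\<Sum>i<n. X h i w) \<noteq>
    (g (\<Sum>i<n'. X j i w) - post_var (prior_sigma h) (sigma h) n * (prior_mu h / (prior_sigma h)\<^sup>2)) / (post_var (prior_sigma h) (sigma h) n / (sigma h)\<^sup>2)"
    using assms by (intro AE_indep_ne_fun[OF partial_sums_indep partial_sum_normal]) auto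
  thus ?thesis by (simp add: post_mean_after_eq_iff[OF assms(1)])
qed

lemma AE_post_means_distinct:
  "AE w in M. \<forall>h h' n n'. h < k \<longrightarrow> h' < k \<longrightarrow> h \<noteq> h' \<longrightarrow> 1 \<le> n \<longrightarrow> 1 \<le> n' \<longrightarrow> pmean w h n \<noteq> pmean w h' n'"
  unfolding AE_all_countable post_mean_after_def[of _ _ _ _ _ h' n' for h' n']
  by (intro allI AE_impI AE_post_mean_after_ne_fun[unfolded post_mean_after_def]) auto

lemma AE_post_mean_ne_mean:
  "AE w in M. \<forall>h h' n. h < k \<longrightarrow> h' < k \<longrightarrow> 1 \<le> n \<longrightarrow> pmean w h n \<noteq> mu h'"
  unfolding AE_all_countable by (intro allI AE_impI AE_post_mean_after_ne_const)

text \<open>A tie \<open>(\<mu>\<^sub>i - m\<^sub>j)\<^sup>2 v\<^sub>j\<^sub>' = (\<mu>\<^sub>i - m\<^sub>j\<^sub>')\<^sup>2 v\<^sub>j\<close> forces \<open>m\<^sub>j = \<mu>\<^sub>i \<plusminus> R\<close>, where \<open>R\<close> is a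
  measurable function of the partial sum of \<open>j'\<close>.\<close>

lemma AE_weighted_gaps_distinct:
  "AE w in M. \<forall>i j j' n n'. i < k \<longrightarrow> j < k \<longrightarrow> j' < k \<longrightarrow> j \<noteq> j' \<longrightarrow> 1 \<le> n \<longrightarrow> 1 \<le> n' \<longrightarrow>
     (mu i - pmean w j n)\<^sup>2 * post_var (prior_sigma j') (sigma j') n' \<noteq>
     (mu i - pmean w j' n')\<^sup>2 * post_var (prior_sigma j) (sigma j) n"
  unfolding AE_all_countable
proof (intro allI AE_impI)
  fix i j j' n n' :: nat
  assume ij: "i < k" "j < k" "j' < k" "j \<noteq> j'" "1 \<le> n" "1 \<le> n'"
  define v where "v = post_var (prior_sigma j) (sigma j) n"
  define v' where "v' = post_var (prior_sigma j') (sigma j') n'"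
  have v: "0 < v" "0 < v'" unfolding v_def v'_def using ij sigma_pos prior_sigma_pos by (auto intro!: post_var_pos)
  define R where "R z = sqrt ((mu i - post_mean (prior_mu j') (prior_sigma j') (sigma j') n' z)\<^sup>2 * v / v')" for z
  have R: "R \<in> borel_measurable borel" unfolding R_def by measurable
  have "AE w in M. pmean w j n \<noteq> mu i - R (\<Sum>l<n'. X j' l w) \<and> pmean w j n \<noteq> mu i + R (\<Sum>l<n'. X j' l w)"
    using AE_post_mean_after_ne_fun[OF ij(2,3,4,5), of "\<lambda>z. mu i - R z" n']
      AE_post_mean_after_ne_fun[OF ij(2,3,4,5), of "\<lambda>z. mu i + R z" n'] R
    by (auto intro: AE_conjI)
  thus "AE w in M. (mu i - pmean w j n)\<^sup>2 * v' \<noteq> (mu i - pmean w j' n')\<^sup>2 * v"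
  proof (rule eventually_mono, intro notI)
    fix w assume ne: "pmean w j n \<noteq> mu i - R (\<Sum>l<n'. X j' l w) \<and> pmean w j n \<noteq> mu i + R (\<Sum>l<n'. X j' l w)"
    assume "(mu i - pmean w j n)\<^sup>2 * v' = (mu i - pmean w j' n')\<^sup>2 * v"
    hence "(mu i - pmean w j n)\<^sup>2 = (R (\<Sum>l<n'. X j' l w))\<^sup>2"
      using v unfolding R_def post_mean_after_def by (simp add: field_simps)
    thus False using ne by (auto simp: power2_eq_iff)
  qed
qed

end

theorem theorem1:
  fixes M :: "'w measure"
    and k m n0 :: nat
    and mu sigma mu0 sigma0 :: "nat \<Rightarrow> real"
    and X :: "nat \<Rightarrow> nat \<Rightarrow> 'w \<Rightarrow> real"
    and pick :: "nat \<Rightarrow> (nat \<Rightarrow> real) \<Rightarrow> nat"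
    and best :: nat
  assumes "prob_space M"
    and "2 \<le> k" and "1 \<le> m" and "m < k" and "1 \<le> n0"
    and "\<And>h. h < k \<Longrightarrow> sigma h > 0"
    and "\<And>h. h < k \<Longrightarrow> sigma0 h > 0"
    and "\<And>h h'. h < k \<Longrightarrow> h' < k \<Longrightarrow> h \<noteq> h' \<Longrightarrow> mu h \<noteq> mu h'"
    and "best < k" and "\<And>h. h < k \<Longrightarrow> mu h \<le> mu best"
    and "\<And>h i. h < k \<Longrightarrow> distributed M lborel (X h i) (normal_density (mu h) (sigma h))"
    and "prob_space.indep_vars M (\<lambda>_. borel) (\<lambda>(h, i). X h i) ({..<k} \<times> UNIV)"
    and "\<And>r V. pick r V < k \<and> (\<forall>a<k. V a \<le> V (pick r V))"
  shows "AE w in M. \<exists>r0. \<forall>r\<ge>r0.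
           best \<in> top_set k m (pmeans mu0 sigma0 sigma X w
                                 (aoa_counts k m n0 mu0 sigma0 sigma X pick w r))"
proof -
  interpret gaussian_samples_prior M k mu sigma X mu0 sigma0
    using assms(1,6,7,11,12)
    by (simp add: gaussian_samples_prior_def gaussian_samples_prior_axioms_def
        gaussian_samples_def gaussian_samples_axioms_def)
  show ?thesis
    using AE_sample_means_tendsto AE_post_means_distinct
      AE_post_mean_ne_mean AE_weighted_gaps_distinct
  proof eventually_elim
    case (elim w)
    interpret aoa_path k m n0 mu sigma mu0 sigma0 X pick best w
      by (rule aoa_path.intro[OF assms(3-10,13) elim[rule_format]])
    show ?case by (rule eventually_best_in_top_set)
  qed
qed

end
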